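(* Let $a_k\ge0$, $b_k>0$ $(k\ge0)$ be such that $\mathcal{A}(t)=\sum_{k=0}^\infty a_k(k+1)^{-t}$ and $\mathcal{B}(t)=\sum_{k=0}^\infty b_k(k+1)^{-t}$ converge on $(0,\infty)$. If $\{a_k/b_k\}$ is increasing (resp. decreasing) for all $k\ge0$, then $t\mapsto\mathcal{A}(t)/\mathcal{B}(t)$ is decreasing (resp. increasing) on $(0,\infty)$ and $t\mapsto\mathcal{A}(1-t)/\mathcal{B}(1-t)$ is increasing (resp. decreasing) on $(-\infty,1)$. *)

theory Defs
  imports "HOL-Analysis.Analysis"
begin

definition dser :: "(nat \<Rightarrow> real) \<Rightarrow> real \<Rightarrow> real" where
  "dser c t = (\<Sum>k. c k * (real k + 1) powr (- t))"

end

theory Submission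
  imports Defs
begin

text \<open>
  For \<open>s \<le> t\<close> write \<open>\<A>(t) = \<Sum> b\<^sub>k (k+1)\<^sup>-\<^sup>s \<cdot> (a\<^sub>k/b\<^sub>k) \<cdot> (k+1)\<^sup>s\<^sup>-\<^sup>t\<close>, and similarly for \<open>\<B>(t)\<close>:
  both are sums against the positive weights \<open>b\<^sub>k (k+1)\<^sup>-\<^sup>s\<close>, of the increasing sequence
  \<open>a\<^sub>k/b\<^sub>k\<close> times the decreasing sequence \<open>(k+1)\<^sup>s\<^sup>-\<^sup>t\<close>, resp. of the latter alone.
  Chebyshev's sum inequality for oppositely ordered sequences then gives
  \<open>\<A>(t) \<B>(s) \<le> \<A>(s) \<B>(t)\<close>. The decreasing case follows by replacing \<open>a\<close> with \<open>-a\<close>, and the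
  statement about \<open>1 - t\<close> is the reflection \<open>t \<mapsto> 1 - t\<close>.
\<close>

lemma single_crossing_threshold:
  fixes r w :: "nat \<Rightarrow> real"
  assumes "mono r" "antimono w" "bdd_below (range w)"
  obtains \<mu> where "\<And>k. (r k - L) * (w k - \<mu>) \<le> 0"
proof (cases "\<exists>k. r k > L")
  case True
  define m where "m = (LEAST k. r k > L)"
  have "r m > L"
    unfolding m_def by (rule LeastI_ex[OF True])
  have "(r k - L) * (w k - w m) \<le> 0" for k
  proof (cases "r k > L")
    case True
    then have "m \<le> k"
      unfolding m_def by (rule Least_le)
    then show ?thesis
      using True \<open>antimono w\<close> by (simp add: antimonoD mult_nonneg_nonpos)
  next
    case False
    with \<open>r m > L\<close> \<open>mono r\<close> have "k \<le> m"
      by (metis le_less_trans monoD nat_le_linear not_less order.antisym)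
    then show ?thesis
      using False \<open>antimono w\<close> by (simp add: antimonoD mult_nonpos_nonneg)
  qed
  then show ?thesis
    using that by blast
next
  case False
  from \<open>bdd_below (range w)\<close> obtain c where "\<And>k. c \<le> w k"
    by (auto simp: bdd_below_def)
  then have "(r k - L) * (w k - c) \<le> 0" for k
    using False by (simp add: mult_nonpos_nonneg not_less)
  then show ?thesis
    using that by blast
qed

lemma Chebyshev_suminf_upper:
  fixes p r w :: "nat \<Rightarrow> real"
  assumes p_nonneg: "\<And>k. p k \<ge> 0"
    and "mono r" "antimono w" "bdd_below (range w)"
    and p: "summable p"
    and pr: "summable (\<lambda>k. p k * r k)"
    and pw: "summable (\<lambda>k. p k * w k)"
    and prw: "summable (\<lambda>k. p k * r k * w k)"
  shows "(\<Sum>k. p k * r k * w k) * (\<Sum>k. p k) \<le> (\<Sum>k. p k * r k) * (\<Sum>k. p k * w k)"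
proof (cases "(\<Sum>k. p k) = 0")
  case True
  then have "p = (\<lambda>k. 0)"
    using suminf_eq_zero_iff[OF p p_nonneg] by auto
  then show ?thesis
    by simp
next
  case False
  then have P_pos: "(\<Sum>k. p k) > 0"
    using suminf_nonneg[OF p p_nonneg] by linarith
  define L where "L = (\<Sum>k. p k * r k) / (\<Sum>k. p k)"
  \<comment> \<open>\<open>L\<close> is the \<open>p\<close>-mean of \<open>r\<close>, so shifting \<open>w\<close> by the threshold \<open>\<mu>\<close> does not change the defect\<close>
  obtain \<mu> where \<mu>: "\<And>k. (r k - L) * (w k - \<mu>) \<le> 0"
    using single_crossing_threshold[OF \<open>mono r\<close> \<open>antimono w\<close> \<open>bdd_below (range w)\<close>] by blast
  have "(\<lambda>k. p k * r k * w k - L * (p k * w k) - \<mu> * (p k * r k - L * p k)) sums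
      ((\<Sum>k. p k * r k * w k) - L * (\<Sum>k. p k * w k) - \<mu> * ((\<Sum>k. p k * r k) - L * (\<Sum>k. p k)))"
    by (intro sums_diff sums_mult summable_sums p pr pw prw)
  moreover have "(\<Sum>k. p k * r k) - L * (\<Sum>k. p k) = 0"
    unfolding L_def using P_pos by simp
  moreover have "p k * r k * w k - L * (p k * w k) - \<mu> * (p k * r k - L * p k)
      = p k * ((r k - L) * (w k - \<mu>))" for k
    by (simp add: algebra_simps)
  ultimately have sums: "(\<lambda>k. p k * ((r k - L) * (w k - \<mu>))) sums
      ((\<Sum>k. p k * r k * w k) - L * (\<Sum>k. p k * w k))"
    by simp
  have "p k * ((r k - L) * (w k - \<mu>)) \<le> 0" for k
    by (rule mult_nonneg_nonpos[OF p_nonneg \<mu>])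
  then have "(\<Sum>k. p k * r k * w k) - L * (\<Sum>k. p k * w k) \<le> 0"
    using sums by (rule sums_le[OF _ _ sums_zero])
  then show ?thesis
    using P_pos by (simp add: L_def field_simps)
qed

lemma dser_pos:
  assumes "\<And>k. b k > 0" "summable (\<lambda>k. b k * (real k + 1) powr (- t))"
  shows "dser b t > 0"
  unfolding dser_def by (rule suminf_pos) (use assms in auto)

lemma dser_uminus:
  assumes "summable (\<lambda>k. a k * (real k + 1) powr (- t))"
  shows "dser (\<lambda>k. - a k) t = - dser a t"
  unfolding dser_def using suminf_minus[OF assms] by simp

lemma dser_ratio_antimono:
  fixes a b :: "nat \<Rightarrow> real"
  assumes b_pos: "\<And>k. b k > 0"
    and "mono (\<lambda>k. a k / b k)" "s \<le> t"
    and as: "summable (\<lambda>k. a k * (real k + 1) powr (- s))"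
    and at: "summable (\<lambda>k. a k * (real k + 1) powr (- t))"
    and bs: "summable (\<lambda>k. b k * (real k + 1) powr (- s))"
    and bt: "summable (\<lambda>k. b k * (real k + 1) powr (- t))"
  shows "dser a t / dser b t \<le> dser a s / dser b s"
proof -
  define p where "p k = b k * (real k + 1) powr (- s)" for k
  define w where "w k = (real k + 1) powr (s - t)" for k
  have w_shift: "(real k + 1) powr (- s) * w k = (real k + 1) powr (- t)" for k
    unfolding w_def by (simp flip: powr_add)
  have pr: "p k * (a k / b k) = a k * (real k + 1) powr (- s)" for k
    unfolding p_def using b_pos[of k] by simp
  have pw: "p k * w k = b k * (real k + 1) powr (- t)" for k
    unfolding p_def using w_shift[of k] by (simp flip: mult.assoc)
  have prw: "a k * (real k + 1) powr (- s) * w k = a k * (real k + 1) powr (- t)" for k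
    using w_shift[of k] by (simp flip: mult.assoc)
  have "antimono w"
    unfolding w_def using \<open>s \<le> t\<close> by (intro antimonoI powr_mono2') auto
  moreover have "bdd_below (range w)"
    unfolding w_def by (intro bdd_belowI[of _ 0]) auto
  moreover have "p k \<ge> 0" for k
    unfolding p_def using b_pos[of k] by simp
  moreover have "summable p"
    using bs unfolding p_def .
  ultimately have "dser a t * dser b s \<le> dser a s * dser b t"
    using Chebyshev_suminf_upper[of p "\<lambda>k. a k / b k" w] \<open>mono (\<lambda>k. a k / b k)\<close> as at bt
    unfolding dser_def pr pw prw by (simp add: p_def mult.commute)
  then show ?thesis
    using dser_pos[OF b_pos bs] dser_pos[OF b_pos bt] by (simp add: divide_simps mult.commute)
qed

theorem corollary9:
  fixes a b :: "nat \<Rightarrow> real"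
  assumes a_nonneg: "\<And>k. a k \<ge> 0"
    and b_pos: "\<And>k. b k > 0"
    and a_conv: "\<And>t. t > 0 \<Longrightarrow> summable (\<lambda>k. a k * (real k + 1) powr (- t))"
    and b_conv: "\<And>t. t > 0 \<Longrightarrow> summable (\<lambda>k. b k * (real k + 1) powr (- t))"
  shows "(mono (\<lambda>k. a k / b k) \<longrightarrow>
            antimono_on {0<..} (\<lambda>t. dser a t / dser b t) \<and>
            mono_on {..<1} (\<lambda>t. dser a (1 - t) / dser b (1 - t)))
       \<and> (antimono (\<lambda>k. a k / b k) \<longrightarrow>
            mono_on {0<..} (\<lambda>t. dser a t / dser b t) \<and>
            antimono_on {..<1} (\<lambda>t. dser a (1 - t) / dser b (1 - t)))"
proof -
  have mono_case: "dser a t / dser b t \<le> dser a s / dser b s"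
    if "mono (\<lambda>k. a k / b k)" "0 < s" "s \<le> t" for s t
    using that by (intro dser_ratio_antimono b_pos a_conv b_conv) auto
  have antimono_case: "dser a s / dser b s \<le> dser a t / dser b t"
    if "antimono (\<lambda>k. a k / b k)" "0 < s" "s \<le> t" for s t
  proof -
    have "mono (\<lambda>k. - a k / b k)"
      using that(1) by (auto simp: monotone_def)
    then have "dser (\<lambda>k. - a k) t / dser b t \<le> dser (\<lambda>k. - a k) s / dser b s"
      using that a_conv by (intro dser_ratio_antimono b_pos b_conv) (auto simp: summable_minus_iff)
    then show ?thesis
      using that by (simp add: dser_uminus a_conv)
  qed
  show ?thesis
    by (intro conjI impI monotone_onI) (use mono_case antimono_case in auto)
qed

end
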